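(* In the quality-unaware crowdsensing role selection game described in the context (with $w=1$), on the regime $[0,\Phi_0]$, where $\Phi_0=1-\eta s-p-(1-\eta)$, the function $\Lambda(\Phi)$ is either monotonically increasing in $\Phi$, or first decreasing and then increasing in $\Phi$ (i.e., there is $\Phi'\in[0,\Phi_0]$ such that $\Lambda$ is decreasing on $[0,\Phi']$ and increasing on $[\Phi',\Phi_0]$).
   Context: Users form a continuum; a user's type is $(v,c)\in[0,1]^2$, distributed uniformly on $[0,1]^2$. Parameters: weight $w=1$, $s\ge0$, $\eta\in[0,1]$, $p\ge0$. Each user chooses a role in $\{\mathrm S,\mathrm R,\mathrm A\}$. Given a number $\Phi$, payoffs are $\pi_{vc}(\mathrm{S})=v-c+\Phi$, $\pi_{vc}(\mathrm{R})=\eta(v-s)-p$, $\pi_{vc}(\mathrm{A})=0$, and a requester pays $\beta_{vc}=(1-\eta)(v-s)+p$. Define $\widetilde{S}^{\mathrm S}(\Phi)=\{(v,c)\in[0,1]^2:\pi_{vc}(\mathrm S)>\pi_{vc}(\mathrm R),\pi_{vc}(\mathrm S)>\pi_{vc}(\mathrm A)\}$, $\widetilde{S}^{\mathrm R}(\Phi)=\{(v,c)\in[0,1]^2:\pi_{vc}(\mathrm R)>\pi_{vc}(\mathrm S),\pi_{vc}(\mathrm R)>\pi_{vc}(\mathrm A)\}$, $N^{se}(\Phi)=\iint_{\widetilde{S}^{\mathrm S}(\Phi)}\mathrm dv\,\mathrm dc$, $B^{se}(\Phi)=\iint_{\widetilde{S}^{\mathrm R}(\Phi)}[(1-\eta)(v-s)+p]\,\mathrm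 dv\,\mathrm dc$, and $\Lambda(\Phi)=\Phi N^{se}(\Phi)-B^{se}(\Phi)$ (on $[0,\Phi_0]$ this is the function the paper denotes $\Lambda_l$). *)

theory Defs
  imports "HOL-Analysis.Analysis"
begin

text \<open>Quality-unaware crowdsensing role selection game with weight w = 1.
  A user type is a pair (v, c) in the unit square, uniformly distributed
  (density 1). Parameters: eta, s, p.\<close>

definition piS :: "real \<Rightarrow> real \<Rightarrow> real \<Rightarrow> real" where
  "piS \<Phi> v c = v - c + \<Phi>"

definition piR :: "real \<Rightarrow> real \<Rightarrow> real \<Rightarrow> real \<Rightarrow> real" where
  "piR \<eta> s p v = \<eta> * (v - s) - p"

definition piA :: real where
  "piA = 0"

definition unit_square :: "(real \<times> real) set" where
  "unit_square = {0..1} \<times> {0..1}"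

definition SetS :: "real \<Rightarrow> real \<Rightarrow> real \<Rightarrow> real \<Rightarrow> (real \<times> real) set" where
  "SetS \<eta> s p \<Phi> = {(v, c) \<in> unit_square.
      piS \<Phi> v c > piR \<eta> s p v \<and> piS \<Phi> v c > piA}"

definition SetR :: "real \<Rightarrow> real \<Rightarrow> real \<Rightarrow> real \<Rightarrow> (real \<times> real) set" where
  "SetR \<eta> s p \<Phi> = {(v, c) \<in> unit_square.
      piR \<eta> s p v > piS \<Phi> v c \<and> piR \<eta> s p v > piA}"

definition Nse :: "real \<Rightarrow> real \<Rightarrow> real \<Rightarrow> real \<Rightarrow> real" where
  "Nse \<eta> s p \<Phi> = integral (SetS \<eta> s p \<Phi>) (\<lambda>_. 1)"

definition Bse :: "real \<Rightarrow> real \<Rightarrow> real \<Rightarrow> real \<Rightarrow> real" where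
  "Bse \<eta> s p \<Phi> = integral (SetR \<eta> s p \<Phi>)
      (\<lambda>(v, c). (1 - \<eta>) * (v - s) + p)"

definition Lambda :: "real \<Rightarrow> real \<Rightarrow> real \<Rightarrow> real \<Rightarrow> real" where
  "Lambda \<eta> s p \<Phi> = \<Phi> * Nse \<eta> s p \<Phi> - Bse \<eta> s p \<Phi>"

definition Phi0 :: "real \<Rightarrow> real \<Rightarrow> real \<Rightarrow> real" where
  "Phi0 \<eta> s p = 1 - \<eta> * s - p - (1 - \<eta>)"

end

theory Submission
  imports Defs
begin

text \<open>Raising \<Phi> makes role S more attractive relative to both alternatives, so the set of
  users choosing S grows and the set of users choosing R shrinks. A requester pays
  \<open>(1 - \<eta>)(v - s) + p \<ge> 0\<close>, because choosing R over A forces \<open>\<eta>(v - s) > p \<ge> 0\<close>. Hence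
  \<open>Nse\<close> is nonnegative and increasing and \<open>Bse\<close> is decreasing, so for \<open>\<Phi> \<ge> 0\<close> the function
  \<open>\<Phi> * Nse \<Phi> - Bse \<Phi>\<close> is increasing: the first alternative always holds.\<close>

lemma unit_square_eq_cbox: "unit_square = cbox (0, 0) (1, 1)"
  unfolding unit_square_def by (simp add: cbox_Pair_eq)

lemma lmeasurable_unit_square_Int_open:
  assumes "open U"
  shows "unit_square \<inter> U \<in> lmeasurable"
proof (rule bounded_set_imp_lmeasurable)
  show "bounded (unit_square \<inter> U)"
    by (simp add: unit_square_eq_cbox bounded_Int)
  show "unit_square \<inter> U \<in> sets lebesgue"
    using assms by (intro sets.Int) (auto simp: unit_square_eq_cbox borel_open)
qed

lemma lmeasurable_SetS: "SetS \<eta> s p \<Phi> \<in> lmeasurable"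
proof -
  have "SetS \<eta> s p \<Phi> = unit_square \<inter>
      {x. piR \<eta> s p (fst x) < piS \<Phi> (fst x) (snd x) \<and> piA < piS \<Phi> (fst x) (snd x)}"
    unfolding SetS_def by auto
  moreover have "open {x. piR \<eta> s p (fst x) < piS \<Phi> (fst x) (snd x) \<and> piA < piS \<Phi> (fst x) (snd x)}"
    unfolding piS_def piR_def piA_def
    by (intro open_Collect_conj open_Collect_less continuous_intros)
  ultimately show ?thesis
    by (simp add: lmeasurable_unit_square_Int_open)
qed

lemma lmeasurable_SetR: "SetR \<eta> s p \<Phi> \<in> lmeasurable"
proof -
  have "SetR \<eta> s p \<Phi> = unit_square \<inter>
      {x. piS \<Phi> (fst x) (snd x) < piR \<eta> s p (fst x) \<and> piA < piR \<eta> s p (fst x)}"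
    unfolding SetR_def by auto
  moreover have "open {x. piS \<Phi> (fst x) (snd x) < piR \<eta> s p (fst x) \<and> piA < piR \<eta> s p (fst x)}"
    unfolding piS_def piR_def piA_def
    by (intro open_Collect_conj open_Collect_less continuous_intros)
  ultimately show ?thesis
    by (simp add: lmeasurable_unit_square_Int_open)
qed

lemma SetS_mono: "\<Phi>1 \<le> \<Phi>2 \<Longrightarrow> SetS \<eta> s p \<Phi>1 \<subseteq> SetS \<eta> s p \<Phi>2"
  by (auto simp: SetS_def piS_def piR_def piA_def)

lemma SetR_antimono: "\<Phi>1 \<le> \<Phi>2 \<Longrightarrow> SetR \<eta> s p \<Phi>2 \<subseteq> SetR \<eta> s p \<Phi>1"
  by (auto simp: SetR_def piS_def piR_def piA_def)

lemma payment_nonneg_on_SetR: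
  assumes "0 \<le> \<eta>" "\<eta> \<le> 1" "0 \<le> p" and "(v, c) \<in> SetR \<eta> s p \<Phi>"
  shows "0 \<le> (1 - \<eta>) * (v - s) + p"
proof -
  have "p < \<eta> * (v - s)"
    using assms(4) by (simp add: SetR_def piR_def piA_def)
  then have "0 < \<eta> * (v - s)"
    using assms(3) by linarith
  then have "0 < v - s"
    using assms(1) by (simp add: zero_less_mult_iff)
  then show ?thesis
    using assms(2,3) by simp
qed

lemma payment_integrable_on_SetR:
  "(\<lambda>(v, c). (1 - \<eta>) * (v - s) + p) integrable_on SetR \<eta> s p \<Phi>"
proof -
  have "(\<lambda>(v::real, c::real). (1 - \<eta>) * (v - s) + p) absolutely_integrable_on unit_square"
    unfolding unit_square_eq_cbox
    by (rule absolutely_integrable_continuous) (auto simp: case_prod_beta intro!: continuous_intros)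
  then have "(\<lambda>(v::real, c::real). (1 - \<eta>) * (v - s) + p) absolutely_integrable_on SetR \<eta> s p \<Phi>"
    by (rule set_integrable_subset) (use lmeasurable_SetR in \<open>auto simp: SetR_def\<close>)
  then show ?thesis
    by (simp add: set_lebesgue_integral_eq_integral(1))
qed

lemma Nse_nonneg: "0 \<le> Nse \<eta> s p \<Phi>"
  unfolding Nse_def by (rule integral_nonneg) (auto intro: integrable_on_const lmeasurable_SetS)

lemma Nse_mono: "\<Phi>1 \<le> \<Phi>2 \<Longrightarrow> Nse \<eta> s p \<Phi>1 \<le> Nse \<eta> s p \<Phi>2"
  unfolding Nse_def
  by (intro integral_subset_le SetS_mono integrable_on_const lmeasurable_SetS) auto

lemma Bse_antimono:
  assumes "0 \<le> \<eta>" "\<eta> \<le> 1" "0 \<le> p" and "\<Phi>1 \<le> \<Phi>2"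
  shows "Bse \<eta> s p \<Phi>2 \<le> Bse \<eta> s p \<Phi>1"
  unfolding Bse_def
  using assms
  by (intro integral_subset_le SetR_antimono payment_integrable_on_SetR)
    (auto intro: payment_nonneg_on_SetR)

lemma Lambda_mono_on_nonneg:
  assumes "0 \<le> \<eta>" "\<eta> \<le> 1" "0 \<le> p"
  shows "mono_on {0..} (Lambda \<eta> s p)"
proof (rule mono_onI)
  fix a b :: real
  assume "a \<in> {0..}" "b \<in> {0..}" "a \<le> b"
  then have "a * Nse \<eta> s p a \<le> b * Nse \<eta> s p b"
    by (intro mult_mono Nse_mono Nse_nonneg) auto
  moreover have "Bse \<eta> s p b \<le> Bse \<eta> s p a"
    using assms \<open>a \<le> b\<close> by (rule Bse_antimono)
  ultimately show "Lambda \<eta> s p a \<le> Lambda \<eta> s p b"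
    unfolding Lambda_def by linarith
qed

theorem lemma2:
  fixes \<eta> s p :: real
  assumes "s \<ge> 0" and "0 \<le> \<eta>" and "\<eta> \<le> 1" and "p \<ge> 0"
  shows "mono_on {0..Phi0 \<eta> s p} (Lambda \<eta> s p)
    \<or> (\<exists>\<Phi>'\<in>{0..Phi0 \<eta> s p}.
         antimono_on {0..\<Phi>'} (Lambda \<eta> s p)
       \<and> mono_on {\<Phi>'..Phi0 \<eta> s p} (Lambda \<eta> s p))"
proof (rule disjI1)
  show "mono_on {0..Phi0 \<eta> s p} (Lambda \<eta> s p)"
    using Lambda_mono_on_nonneg[OF assms(2-4)] by (rule mono_on_subset) auto
qed

end
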